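(* Let $N\ge1$ and let $Y_1,\dots,Y_N$ be independent random variables, where $Y_i$ is geometrically distributed with success probability $p_i\in(0,1]$. Then $$\mathbb{P}\Big(\sum_{i=1}^NY_i>\frac{N^2}{4\sum_{i=1}^Np_i}\Big)\ge1-\frac{16}{9N}.$$
   Context: A random variable $Y$ is geometric with success probability $p$ if $\mathbb{P}(Y=s)=(1-p)^{s-1}p$ for $s=1,2,\dots$. *)

theory Defs
  imports "HOL-Probability.Probability"
begin

definition geometric_rv :: "'a measure \<Rightarrow> real \<Rightarrow> ('a \<Rightarrow> nat) \<Rightarrow> bool" where
  "geometric_rv M p Y \<longleftrightarrow>
     Y \<in> measurable M (count_space UNIV) \<and>
     (\<forall>s::nat. s \<ge> 1 \<longrightarrow> measure M {x \<in> space M. Y x = s} = (1 - p) ^ (s - 1) * p)"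

end

theory Submission
  imports Defs
begin

text \<open>A Chernoff bound for the lower tail. For \<open>0 < z \<le> 1\<close>, Markov's inequality for \<open>z^S\<close>
  gives \<open>P(S \<le> t) \<le> z^(-t) E[z^S]\<close>, and by independence \<open>E[z^S]\<close> is the product of the
  generating functions \<open>p\<^sub>i z / (1 - (1 - p\<^sub>i) z)\<close>. With \<open>P = \<Sigma> p\<^sub>i\<close> and
  \<open>z = N / (N + P)\<close> the factors become \<open>a\<^sub>i / (1 + a\<^sub>i)\<close>, where the \<open>a\<^sub>i = N p\<^sub>i / P\<close>
  sum to \<open>N\<close>; since \<open>1 + a \<ge> 2 \<surd>a\<close> and \<open>\<Pi> a\<^sub>i \<le> 1\<close> by AM-GM, their product is at most
  \<open>2^(-N)\<close>. For \<open>t = N^2 / (4 P)\<close> also \<open>z^(-t) \<le> exp (t P / N) = e^(N/4)\<close>, hence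
  \<open>P(S \<le> t) \<le> (e^(1/4) / 2)^N \<le> (2/3)^N \<le> 16 / (9 N)\<close>.\<close>

lemma suminf_ennreal_geometric:
  fixes c q :: real
  assumes "0 \<le> c" "0 \<le> q" "q < 1"
  shows "(\<Sum>s. ennreal (c * q ^ s)) = ennreal (c / (1 - q))"
proof -
  have "(\<Sum>s. ennreal (c * q ^ s)) = ennreal (\<Sum>s. c * q ^ s)"
    using assms by (intro suminf_ennreal2) (auto intro!: summable_mult summable_geometric)
  also have "(\<Sum>s. c * q ^ s) = c / (1 - q)"
    using assms by (simp add: suminf_mult suminf_geometric divide_inverse)
  finally show ?thesis .
qed

lemma suminf_ennreal_split_head:
  fixes f :: "nat \<Rightarrow> ennreal"
  shows "(\<Sum>s. f s) = (\<Sum>s. f (Suc s)) + f 0"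
  using suminf_offset[of f 1, OF summableI] by simp

lemma nn_integral_nat_valued:
  fixes f :: "nat \<Rightarrow> ennreal"
  assumes [measurable]: "X \<in> measurable M (count_space UNIV)"
  shows "(\<integral>\<^sup>+x. f (X x) \<partial>M) = (\<Sum>s. f s * emeasure M {x\<in>space M. X x = s})"
proof -
  have "(\<integral>\<^sup>+x. f (X x) \<partial>M) = (\<integral>\<^sup>+x. (\<Sum>s. f s * indicator {x\<in>space M. X x = s} x) \<partial>M)"
  proof (rule nn_integral_cong)
    fix x assume "x \<in> space M"
    then have "(\<Sum>s. f s * indicator {x\<in>space M. X x = s} x) = (\<Sum>s\<in>{X x}. f s * indicator {x\<in>space M. X x = s} x)"
      by (intro suminf_finite) (auto simp: indicator_def)
    with \<open>x \<in> space M\<close> show "f (X x) = (\<Sum>s. f s * indicator {x\<in>space M. X x = s} x)"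
      by simp
  qed
  also have "\<dots> = (\<Sum>s. \<integral>\<^sup>+x. f s * indicator {x\<in>space M. X x = s} x \<partial>M)"
    by (intro nn_integral_suminf) measurable
  also have "\<dots> = (\<Sum>s. f s * emeasure M {x\<in>space M. X x = s})"
    by (intro suminf_cong nn_integral_cmult_indicator) measurable
  finally show ?thesis .
qed

lemma (in prob_space) geometric_rv_null_at_0:
  assumes "geometric_rv M p Y" "0 < p" "p \<le> 1"
  shows "emeasure M {x\<in>space M. Y x = 0} = 0"
proof -
  have [measurable]: "Y \<in> measurable M (count_space UNIV)"
    and pmf: "\<And>s. measure M {x\<in>space M. Y x = Suc s} = (1 - p) ^ s * p"
    using assms(1) unfolding geometric_rv_def by auto
  \<comment> \<open>the masses at \<open>s \<ge> 1\<close> already add up to \<open>1\<close>\<close>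
  have "1 + 0 = (\<integral>\<^sup>+x. 1 \<partial>M)"
    by (simp add: emeasure_space_1)
  also have "\<dots> = (\<Sum>s. emeasure M {x\<in>space M. Y x = s})"
    using nn_integral_nat_valued[of Y M "\<lambda>_. 1"] by simp
  also have "\<dots> = (\<Sum>s. emeasure M {x\<in>space M. Y x = Suc s}) + emeasure M {x\<in>space M. Y x = 0}"
    by (rule suminf_ennreal_split_head)
  also have "(\<Sum>s. emeasure M {x\<in>space M. Y x = Suc s}) = (\<Sum>s. ennreal (p * (1 - p) ^ s))"
    by (simp add: emeasure_eq_measure pmf mult.commute)
  also have "\<dots> = 1"
    using assms by (subst suminf_ennreal_geometric) auto
  finally show ?thesis
    unfolding ennreal_add_left_cancel by simp
qed

lemma (in prob_space) geometric_rv_nn_integral: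
  fixes f :: "nat \<Rightarrow> ennreal"
  assumes "geometric_rv M p Y" "0 < p" "p \<le> 1"
  shows "(\<integral>\<^sup>+x. f (Y x) \<partial>M) = (\<Sum>s. f (Suc s) * ennreal ((1 - p) ^ s * p))"
proof -
  have [measurable]: "Y \<in> measurable M (count_space UNIV)"
    and pmf: "\<And>s. measure M {x\<in>space M. Y x = Suc s} = (1 - p) ^ s * p"
    using assms(1) unfolding geometric_rv_def by auto
  have "(\<integral>\<^sup>+x. f (Y x) \<partial>M) = (\<Sum>s. f s * emeasure M {x\<in>space M. Y x = s})"
    by (rule nn_integral_nat_valued) measurable
  also have "\<dots> = (\<Sum>s. f (Suc s) * emeasure M {x\<in>space M. Y x = Suc s})
                    + f 0 * emeasure M {x\<in>space M. Y x = 0}"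
    by (rule suminf_ennreal_split_head)
  also have "\<dots> = (\<Sum>s. f (Suc s) * ennreal ((1 - p) ^ s * p))"
    using geometric_rv_null_at_0[OF assms] by (simp add: emeasure_eq_measure pmf)
  finally show ?thesis .
qed

lemma (in prob_space) geometric_rv_pgf:
  assumes "geometric_rv M p Y" "0 < p" "p \<le> 1" "0 \<le> z" "z \<le> 1"
  shows "(\<integral>\<^sup>+x. ennreal (z ^ Y x) \<partial>M) = ennreal (p * z / (1 - (1 - p) * z))"
proof -
  have "(1 - p) * z < 1"
    using assms mult_left_le[of z "1 - p"] by linarith
  have "(\<integral>\<^sup>+x. ennreal (z ^ Y x) \<partial>M) = (\<Sum>s. ennreal (z ^ Suc s) * ennreal ((1 - p) ^ s * p))"
    using geometric_rv_nn_integral[OF assms(1-3), of "\<lambda>s. ennreal (z ^ s)"] by simp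
  also have "\<dots> = (\<Sum>s. ennreal (p * z * ((1 - p) * z) ^ s))"
    using assms by (simp add: ennreal_mult[symmetric] power_mult_distrib mult_ac)
  also have "\<dots> = ennreal (p * z / (1 - (1 - p) * z))"
    using assms \<open>(1 - p) * z < 1\<close> by (intro suminf_ennreal_geometric) auto
  finally show ?thesis .
qed

lemma emeasure_lower_tail_le_pgf:
  assumes [measurable]: "X \<in> measurable M (count_space UNIV)" and "0 < z" "z \<le> 1"
  shows "emeasure M {x\<in>space M. real (X x) \<le> t}
           \<le> ennreal (z powr - t) * (\<integral>\<^sup>+x. ennreal (z ^ X x) \<partial>M)"
proof -
  have indicator_le:
    "indicator {x\<in>space M. real (X x) \<le> t} x \<le> ennreal (z powr - t) * ennreal (z ^ X x)" for x
  proof (cases "real (X x) \<le> t")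
    case True
    then have "z powr t \<le> z ^ X x"
      using assms by (simp add: powr_realpow[symmetric] powr_mono')
    then have "1 \<le> z powr - t * z ^ X x"
      using assms by (simp add: powr_minus field_simps)
    then show ?thesis
      using assms by (simp add: indicator_def ennreal_mult[symmetric])
  qed (simp add: indicator_def)
  have "emeasure M {x\<in>space M. real (X x) \<le> t} = (\<integral>\<^sup>+x. indicator {x\<in>space M. real (X x) \<le> t} x \<partial>M)"
    by (intro nn_integral_indicator[symmetric]) measurable
  also have "\<dots> \<le> (\<integral>\<^sup>+x. ennreal (z powr - t) * ennreal (z ^ X x) \<partial>M)"
    using indicator_le by (intro nn_integral_mono)
  also have "\<dots> = ennreal (z powr - t) * (\<integral>\<^sup>+x. ennreal (z ^ X x) \<partial>M)"
    by (intro nn_integral_cmult) measurable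
  finally show ?thesis .
qed

lemma (in prob_space) indep_vars_nn_integral_power_sum:
  assumes "finite I" "indep_vars (\<lambda>_. count_space UNIV) X I" "0 \<le> z"
  shows "(\<integral>\<^sup>+x. ennreal (z ^ (\<Sum>i\<in>I. X i x)) \<partial>M) = (\<Prod>i\<in>I. \<integral>\<^sup>+x. ennreal (z ^ X i x) \<partial>M)"
proof -
  have "indep_vars (\<lambda>_. borel) (\<lambda>i x. ennreal (z ^ X i x)) I"
    using indep_vars_compose2[OF assms(2), of "\<lambda>i s. ennreal (z ^ s)" "\<lambda>_. borel"] by simp
  then have "(\<integral>\<^sup>+x. (\<Prod>i\<in>I. ennreal (z ^ X i x)) \<partial>M) = (\<Prod>i\<in>I. \<integral>\<^sup>+x. ennreal (z ^ X i x) \<partial>M)"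
    using assms(1) by (intro indep_vars_nn_integral) simp_all
  then show ?thesis
    using assms(3) by (simp add: prod_ennreal power_sum)
qed

lemma (in prob_space) indep_geometric_sum_lower_tail_pgf:
  assumes "finite I" "indep_vars (\<lambda>_. count_space UNIV) Y I"
    and "\<And>i. i \<in> I \<Longrightarrow> geometric_rv M (p i) (Y i)" "\<And>i. i \<in> I \<Longrightarrow> 0 < p i \<and> p i \<le> 1"
    and "0 < z" "z \<le> 1"
  shows "prob {x\<in>space M. real (\<Sum>i\<in>I. Y i x) \<le> t}
           \<le> z powr - t * (\<Prod>i\<in>I. p i * z / (1 - (1 - p i) * z))"
proof -
  define g where "g i = p i * z / (1 - (1 - p i) * z)" for i
  have g_nonneg: "0 \<le> g i" if "i \<in> I" for i
  proof -
    have "(1 - p i) * z \<le> 1 - p i"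
      using assms(4)[OF that] assms(6) by (intro mult_left_le) auto
    then show ?thesis
      using assms(4)[OF that] assms(5) by (auto simp: g_def intro!: divide_nonneg_nonneg)
  qed
  have [measurable]: "\<And>i. i \<in> I \<Longrightarrow> Y i \<in> measurable M (count_space UNIV)"
    using assms(3) by (auto simp: geometric_rv_def)
  have "(\<lambda>x. \<Sum>i\<in>I. Y i x) \<in> measurable M (count_space UNIV)"
    by measurable
  then have "emeasure M {x\<in>space M. real (\<Sum>i\<in>I. Y i x) \<le> t}
               \<le> ennreal (z powr - t) * (\<integral>\<^sup>+x. ennreal (z ^ (\<Sum>i\<in>I. Y i x)) \<partial>M)"
    using assms(5,6) by (rule emeasure_lower_tail_le_pgf)
  also have "(\<integral>\<^sup>+x. ennreal (z ^ (\<Sum>i\<in>I. Y i x)) \<partial>M) = (\<Prod>i\<in>I. \<integral>\<^sup>+x. ennreal (z ^ Y i x) \<partial>M)"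
    using assms(1,2,5) by (intro indep_vars_nn_integral_power_sum) auto
  also have "\<dots> = (\<Prod>i\<in>I. ennreal (g i))"
    unfolding g_def using assms(3-6) by (intro prod.cong geometric_rv_pgf) auto
  also have "\<dots> = ennreal (\<Prod>i\<in>I. g i)"
    using g_nonneg by (rule prod_ennreal)
  also have "ennreal (z powr - t) * ennreal (\<Prod>i\<in>I. g i) = ennreal (z powr - t * (\<Prod>i\<in>I. g i))"
    using g_nonneg by (simp add: ennreal_mult prod_nonneg)
  finally show ?thesis
    using g_nonneg by (simp add: emeasure_eq_measure prod_nonneg g_def)
qed

lemma prod_le_1_if_sum_le_card:
  fixes a :: "'a \<Rightarrow> real"
  assumes "finite A" "\<And>i. i \<in> A \<Longrightarrow> 0 \<le> a i" "(\<Sum>i\<in>A. a i) \<le> card A"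
  shows "(\<Prod>i\<in>A. a i) \<le> 1"
proof (cases "A = {}")
  case False
  then have "card A > 0"
    using assms(1) by (simp add: card_gt_0_iff)
  have "(\<Prod>i\<in>A. a i) powr (1 / card A) \<le> (\<Sum>i\<in>A. a i / card A)"
    using arith_geom_mean[OF assms(1) False assms(2)] by simp
  also have "\<dots> \<le> 1"
    using assms(3) \<open>card A > 0\<close> by (simp add: sum_divide_distrib[symmetric])
  finally have "((\<Prod>i\<in>A. a i) powr (1 / card A)) powr card A \<le> 1"
    by (intro powr_le1) auto
  then show ?thesis
    using \<open>card A > 0\<close> assms(2) by (simp add: powr_powr prod_nonneg)
qed simp

lemma prod_div_one_plus_le_half_power:
  fixes a :: "'a \<Rightarrow> real"
  assumes "finite A" "\<And>i. i \<in> A \<Longrightarrow> 0 \<le> a i" "(\<Sum>i\<in>A. a i) \<le> card A"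
  shows "(\<Prod>i\<in>A. a i / (1 + a i)) \<le> (1/2) ^ card A"
proof (rule power2_le_imp_le)
  have "(a i / (1 + a i))\<^sup>2 \<le> a i / 4" if "i \<in> A" for i
  proof -
    have "4 * a i \<le> (1 + a i)\<^sup>2"
      using sum_squares_ge_zero[of "1 - a i" 0] by (simp add: power2_eq_square algebra_simps)
    then have "4 * (a i)\<^sup>2 \<le> a i * (1 + a i)\<^sup>2"
      using assms(2)[OF that] mult_left_mono by (fastforce simp: power2_eq_square)
    then show ?thesis
      using assms(2)[OF that] by (simp add: field_simps)
  qed
  then have "(\<Prod>i\<in>A. a i / (1 + a i))\<^sup>2 \<le> (\<Prod>i\<in>A. a i / 4)"
    unfolding prod_power_distrib using assms(2) by (intro prod_mono) auto
  also have "\<dots> = (\<Prod>i\<in>A. a i) / 4 ^ card A"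
    by (simp add: prod_dividef)
  also have "\<dots> \<le> 1 / 4 ^ card A"
    using prod_le_1_if_sum_le_card[OF assms] by (simp add: divide_right_mono)
  also have "\<dots> = ((1/2) ^ card A)\<^sup>2"
    by (simp add: power_divide power2_eq_square flip: power_mult_distrib)
  finally show "(\<Prod>i\<in>A. a i / (1 + a i))\<^sup>2 \<le> ((1/2) ^ card A)\<^sup>2" .
qed simp

lemma pgf_geometric_at_inverse_one_plus:
  fixes c p :: real
  assumes "0 < c" "0 < p"
  shows "p * (1 / (1 + c)) / (1 - (1 - p) * (1 / (1 + c))) = (p / c) / (1 + p / c)"
proof -
  have "0 < 1 + c" "0 < c + p"
    using assms by simp_all
  then have "1 - (1 - p) * (1 / (1 + c)) = (c + p) / (1 + c)"
    by (simp add: field_simps)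
  then have "p * (1 / (1 + c)) / (1 - (1 - p) * (1 / (1 + c))) = p / (c + p)"
    using \<open>0 < 1 + c\<close> by simp
  also have "\<dots> = (p / c) / (1 + p / c)"
    using assms \<open>0 < c + p\<close> by (simp add: field_simps)
  finally show ?thesis .
qed

lemma inverse_one_plus_powr_neg_le_exp:
  fixes x t :: real
  assumes "0 \<le> x" "0 \<le> t"
  shows "(1 / (1 + x)) powr - t \<le> exp (t * x)"
proof -
  have "(1 / (1 + x)) powr - t = exp (t * ln (1 + x))"
    using assms by (simp add: powr_def ln_div)
  also have "\<dots> \<le> exp (t * x)"
    using assms ln_add_one_self_le_self[of x] by (simp add: mult_left_mono)
  finally show ?thesis .
qed

lemma (in prob_space) indep_geometric_sum_lower_tail:
  assumes "finite I" "I \<noteq> {}" "indep_vars (\<lambda>_. count_space UNIV) Y I"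
    and "\<And>i. i \<in> I \<Longrightarrow> geometric_rv M (p i) (Y i)" "\<And>i. i \<in> I \<Longrightarrow> 0 < p i \<and> p i \<le> 1"
    and "0 \<le> t"
  shows "prob {x\<in>space M. real (\<Sum>i\<in>I. Y i x) \<le> t}
           \<le> exp (t * (\<Sum>i\<in>I. p i) / card I) * (1/2) ^ card I"
proof -
  define c where "c = (\<Sum>i\<in>I. p i) / card I"
  define z where "z = 1 / (1 + c)"
  define a where "a i = p i / c" for i
  have "0 < (\<Sum>i\<in>I. p i)"
    using assms(1,2,5) by (intro sum_pos) auto
  then have "0 < c"
    unfolding c_def using assms(1,2) by (simp add: card_gt_0_iff)
  then have "0 < z" "z \<le> 1" and a_nonneg: "\<And>i. i \<in> I \<Longrightarrow> 0 \<le> a i"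
    using assms(5) by (auto simp: z_def a_def less_imp_le)
  have "prob {x\<in>space M. real (\<Sum>i\<in>I. Y i x) \<le> t}
          \<le> z powr - t * (\<Prod>i\<in>I. p i * z / (1 - (1 - p i) * z))"
    using assms \<open>0 < z\<close> \<open>z \<le> 1\<close> by (intro indep_geometric_sum_lower_tail_pgf) auto
  also have "(\<Prod>i\<in>I. p i * z / (1 - (1 - p i) * z)) = (\<Prod>i\<in>I. a i / (1 + a i))"
    unfolding z_def a_def using \<open>0 < c\<close> assms(5)
    by (intro prod.cong refl pgf_geometric_at_inverse_one_plus) auto
  also have "z powr - t * (\<Prod>i\<in>I. a i / (1 + a i)) \<le> exp (t * c) * (1/2) ^ card I"
  proof (rule mult_mono)
    show "z powr - t \<le> exp (t * c)"
      unfolding z_def using \<open>0 < c\<close> assms(6) by (intro inverse_one_plus_powr_neg_le_exp) auto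
    have "(\<Sum>i\<in>I. a i) = (\<Sum>i\<in>I. p i) / c"
      by (simp add: a_def sum_divide_distrib)
    also have "\<dots> = card I"
      using \<open>0 < (\<Sum>i\<in>I. p i)\<close> by (simp add: c_def)
    finally have "(\<Sum>i\<in>I. a i) = card I" .
    with assms(1) a_nonneg show "(\<Prod>i\<in>I. a i / (1 + a i)) \<le> (1/2) ^ card I"
      by (intro prod_div_one_plus_le_half_power) auto
  qed (use a_nonneg in \<open>auto intro!: prod_nonneg\<close>)
  finally show ?thesis
    by (simp add: c_def)
qed

lemma mult_two_thirds_power_le: "real n * (2/3) ^ n \<le> 8/9"
proof (induction n rule: less_induct)
  case (less n)
  show ?case
  proof (cases "n \<le> 3")
    case True
    then have "n \<in> {0, 1, 2, 3}" by auto
    then show ?thesis by (auto simp: eval_nat_numeral)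
  next
    case False
    then have "real n * (2/3) ^ n \<le> real (n - 1) * (2/3) ^ (n - 1)"
      by (cases n) (auto simp: field_simps)
    with less[of "n - 1"] False show ?thesis by simp
  qed
qed

lemma exp_quarter_mult_half_power_le:
  assumes "1 \<le> n"
  shows "exp (real n / 4) * (1/2) ^ n \<le> 16 / (9 * real n)"
proof -
  have "3/4 \<le> exp (- 1/4 :: real)"
    using exp_ge_add_one_self[of "- 1/4 :: real"] by simp
  then have "exp (1/4 :: real) \<le> 4/3"
    by (simp add: exp_minus field_simps)
  then have "exp (1/4) ^ n \<le> (4/3 :: real) ^ n"
    by (simp add: power_mono)
  then have "exp (real n / 4) \<le> (4/3) ^ n"
    by (simp add: exp_of_nat_mult[symmetric])
  then have "exp (real n / 4) * (1/2) ^ n \<le> (4/3) ^ n * (1/2) ^ n"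
    by (rule mult_right_mono) simp
  also have "\<dots> = (2/3) ^ n"
    by (simp add: power_mult_distrib[symmetric])
  also have "\<dots> \<le> 16 / (9 * real n)"
  proof -
    have "real n * (2/3) ^ n \<le> 16/9"
      using mult_two_thirds_power_le[of n] by linarith
    then show ?thesis
      using assms by (simp add: field_simps)
  qed
  finally show ?thesis .
qed

theorem lemma2p4:
  fixes M :: "'a measure" and N :: nat and p :: "nat \<Rightarrow> real" and Y :: "nat \<Rightarrow> 'a \<Rightarrow> nat"
  assumes "prob_space M"
    and "N \<ge> 1"
    and "\<And>i. i \<in> {1..N} \<Longrightarrow> 0 < p i \<and> p i \<le> 1"
    and "prob_space.indep_vars M (\<lambda>_. count_space UNIV) Y {1..N}"
    and "\<And>i. i \<in> {1..N} \<Longrightarrow> geometric_rv M (p i) (Y i)"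
  shows "measure M {x \<in> space M. real (\<Sum>i=1..N. Y i x) > real N ^ 2 / (4 * (\<Sum>i=1..N. p i))}
           \<ge> 1 - 16 / (9 * real N)"
proof -
  interpret prob_space M by fact
  define P where "P = (\<Sum>i=1..N. p i)"
  define t where "t = real N ^ 2 / (4 * P)"
  have "0 < P"
    unfolding P_def using assms(2,3) by (intro sum_pos) auto
  have [measurable]: "\<And>i. i \<in> {1..N} \<Longrightarrow> Y i \<in> measurable M (count_space UNIV)"
    using assms(5) by (auto simp: geometric_rv_def)
  have "prob {x\<in>space M. real (\<Sum>i=1..N. Y i x) \<le> t}
          \<le> exp (t * P / card {1..N}) * (1/2) ^ card {1..N}"
    unfolding P_def using assms(2-5) \<open>0 < P\<close> by (intro indep_geometric_sum_lower_tail) (auto simp: t_def)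
  also have "\<dots> = exp (real N / 4) * (1/2) ^ N"
    using \<open>0 < P\<close> by (simp add: t_def power2_eq_square)
  also have "\<dots> \<le> 16 / (9 * real N)"
    using assms(2) by (rule exp_quarter_mult_half_power_le)
  finally have "prob {x\<in>space M. real (\<Sum>i=1..N. Y i x) \<le> t} \<le> 16 / (9 * real N)" .
  moreover have "{x\<in>space M. real (\<Sum>i=1..N. Y i x) \<le> t} \<in> events"
    by measurable
  moreover have "{x\<in>space M. real (\<Sum>i=1..N. Y i x) > real N ^ 2 / (4 * (\<Sum>i=1..N. p i))}
                   = space M - {x\<in>space M. real (\<Sum>i=1..N. Y i x) \<le> t}"
    by (auto simp: t_def P_def)
  ultimately show ?thesis
    by (simp add: prob_compl)
qed

end
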